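(* Let $\rho_p>0$, $\bar\rho_{ac}>0$, $\bar v_a>0$, $\bar u_d>0$, $C_D>0$, $\rho_{sn,p}>0$, $\Delta T^g_d\ge 0$, an integer $\delta\ge2$, and defender positions $\mathbf{R}_d=[\mathbf{r}_{d1},\dots,\mathbf{r}_{dN_d}]$ in $\mathbb{R}^3$ be given. For a unit vector $\mathbf{u}$, let $f_{\mathbf{u}}(R)=\bar\rho_{ac}+R+\bar v_a\big(\bar T_d(\bar\varrho_d(R))+\Delta T^g_d\big)$ with $\bar\varrho_d(R)=\big(\sum_{j}\|R\mathbf{u}-\mathbf{r}_{dj}\|^\delta\big)^{1/\delta}+\rho_{sn,p}$ and $\bar T_d$ as defined in the context, and suppose $\underline{R}_{ac}(\mathbf{u}):=\min_{R>\rho_p}f_{\mathbf{u}}(R)$ is attained at some $\hat R>\rho_p$. Let $T_a(\mathbf{r},\mathbf{p},\bar\rho_{ac})$ denote the minimum time for the attackers' center starting at $\mathbf{r}$ to reach within distance $\bar\rho_{ac}$ of $\mathbf{p}$, and let $T_d(\mathbf{R}_d,\mathbf{p})$ denote the maximum time needed by the defenders to achieve the planar gathering formation centered at $\mathbf{p}$ (oriented towards the attackers). Assume that for all $R>\rho_p$: $T_d(\mathbf{R}_d,R\mathbf{u})\le\bar T_d(\bar\varrho_d(R))$, and $T_a(\mathbf{r},R\mathbf{u},\bar\rho_{ac})\ge(\|\mathbf{r}\|-R-\bar\rho_{ac})/\bar v_a$ whenever $\mathbf{r}=\|\mathbf{r}\|\mathbf{u}$. Define $Dom_{est}=\{\mathbf{r}\in\mathbb{R}^3\setminus\{0\}:\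 \|\mathbf{r}\|\ge\underline{R}_{ac}(\mathbf{r}/\|\mathbf{r}\|)\}$ (over directions where the minimum is attained). Then every attacker-center initial position $\mathbf{r}\in Dom_{est}$ belongs to the defenders' dominance region $Dom(\mathbf{R}_d,\bar\rho_{ac},\Delta T^g_d)$, i.e. there exists $\upsilon\in\big(\frac{\rho_p}{\|\mathbf{r}\|},1-\frac{\bar\rho_{ac}}{\|\mathbf{r}\|}\big)$ such that, with $\mathbf{r}_{df^g}=\upsilon\mathbf{r}$ (a point on the shortest path from $\mathbf{r}$ to the protected area), $T_a(\mathbf{r},\mathbf{r}_{df^g},\bar\rho_{ac})-T_d(\mathbf{R}_d,\mathbf{r}_{df^g})\ge\Delta T^g_d$; that is, the defenders are guaranteed to achieve the planar gathering formation at $\mathbf{r}_{df^g}$ at least $\Delta T^g_d$ before the attackers reach that position.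
   Context: The protected area is the ball of radius $\rho_p$ centered at the origin. $\bar v_a$ is the attackers' maximum speed, $\bar\rho_{ac}$ the maximum connectivity radius of the attacker swarm around its center of mass, $\rho_{sn,p}$ the radius of the defenders' planar gathering formation, and $\Delta T^g_d\ge0$ a user-defined time margin. $\bar T_d(\varrho)=\frac{1}{\lambda_0}\big(\tanh^{-1}(v_{sw}/\bar v_d)+\tan^{-1}(v_{sw}/\bar v_d)\big)$ with $\lambda_0=\sqrt{\bar u_dC_D}$, $\bar v_d=\sqrt{\bar u_d/C_D}$, $v_{sw}=\sqrt{\frac{(\lambda-1)\bar u_d}{(\lambda+1)C_D}}$, $\lambda=e^{2C_D\varrho}$ (time-optimal travel time over distance $\varrho$ from rest under acceleration bound $\bar u_d$ and quadratic drag $C_D$). The dominance region is $Dom(\mathbf{R}_d,\bar\rho_{ac},\Delta T^g_d)=\{\mathbf{r}\in\mathbb{R}^3:\exists\upsilon\in(\rho_p/\|\mathbf{r}\|,1-\bar\rho_{ac}/\|\mathbf{r}\|)\text{ with } T_a(\mathbf{r},\upsilon\mathbf{r},\bar\rho_{ac})-T_d(\mathbf{R}_d,\upsilon\mathbf{r})\ge\Delta T^g_d\}$. *)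

theory Defs
  imports "HOL-Analysis.Analysis"
begin

text \<open>Time-optimal travel time over distance rho from rest, acceleration bound ud,
  quadratic drag CD.\<close>
definition Tbar_d :: "real \<Rightarrow> real \<Rightarrow> real \<Rightarrow> real" where
  "Tbar_d ud CD rho =
     (let lam0 = sqrt (ud * CD);
          vd = sqrt (ud / CD);
          lam = exp (2 * CD * rho);
          vsw = sqrt ((lam - 1) * ud / ((lam + 1) * CD))
      in (artanh (vsw / vd) + arctan (vsw / vd)) / lam0)"

text \<open>Upper estimate of the defenders' travel distance when gathering at R u.\<close>
definition rhobar_d :: "nat \<Rightarrow> nat \<Rightarrow> (nat \<Rightarrow> real^3) \<Rightarrow> real \<Rightarrow> real^3 \<Rightarrow> real \<Rightarrow> real" where
  "rhobar_d Nd \<delta> rd rho_snp u R =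
     (\<Sum>j<Nd. norm (R *\<^sub>R u - rd j) ^ \<delta>) powr (1 / real \<delta>) + rho_snp"

definition f_est :: "real \<Rightarrow> real \<Rightarrow> real \<Rightarrow> real \<Rightarrow> real \<Rightarrow> nat \<Rightarrow> nat \<Rightarrow> (nat \<Rightarrow> real^3)
                     \<Rightarrow> real \<Rightarrow> real^3 \<Rightarrow> real \<Rightarrow> real" where
  "f_est rho_ac va ud CD dT Nd \<delta> rd rho_snp u R =
     rho_ac + R + va * (Tbar_d ud CD (rhobar_d Nd \<delta> rd rho_snp u R) + dT)"

definition Dom_est :: "real \<Rightarrow> real \<Rightarrow> real \<Rightarrow> real \<Rightarrow> real \<Rightarrow> real \<Rightarrow> nat \<Rightarrow> nat
                       \<Rightarrow> (nat \<Rightarrow> real^3) \<Rightarrow> real \<Rightarrow> (real^3) set" where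
  "Dom_est rho_p rho_ac va ud CD dT Nd \<delta> rd rho_snp =
     {r. r \<noteq> 0 \<and>
        (let u = (1 / norm r) *\<^sub>R r;
             f = f_est rho_ac va ud CD dT Nd \<delta> rd rho_snp u
         in \<exists>Rh > rho_p. (\<forall>R > rho_p. f Rh \<le> f R) \<and> norm r \<ge> f Rh)}"

text \<open>Dominance region; Ta r p rho_ac is the attackers' time, Td Rd p the defenders' time.\<close>
definition Dom :: "real \<Rightarrow> (real^3 \<Rightarrow> real^3 \<Rightarrow> real \<Rightarrow> real) \<Rightarrow> ((nat \<Rightarrow> real^3) \<Rightarrow> real^3 \<Rightarrow> real)
                   \<Rightarrow> (nat \<Rightarrow> real^3) \<Rightarrow> real \<Rightarrow> real \<Rightarrow> (real^3) set" where
  "Dom rho_p Ta Td rd rho_ac dT =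
     {r. \<exists>\<upsilon>. rho_p / norm r < \<upsilon> \<and> \<upsilon> < 1 - rho_ac / norm r \<and>
            Ta r (\<upsilon> *\<^sub>R r) rho_ac - Td rd (\<upsilon> *\<^sub>R r) \<ge> dT}"

end

theory Submission
  imports Defs
begin

text \<open>Along the ray towards the attackers' centre, \<open>\<upsilon> = R/\<parallel>r\<parallel>\<close> with \<open>R\<close> the minimiser
  from \<open>Dom_est\<close> is admissible: \<open>\<parallel>r\<parallel> \<ge> f\<^sub>u(R)\<close> leaves the attackers a distance of at least
  \<open>v\<^sub>a (T\<^sub>d + \<Delta>T)\<close> to cover beyond \<open>R + \<rho>\<^sub>a\<^sub>c\<close>, so the attackers' lower time bound exceeds the
  defenders' upper time bound by \<open>\<Delta>T\<close>. Since \<open>T\<^sub>d > 0\<close> this also places \<open>\<upsilon>\<close> strictly below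
  \<open>1 - \<rho>\<^sub>a\<^sub>c/\<parallel>r\<parallel>\<close>.\<close>

lemma Tbar_d_eq:
  assumes "ud > 0" "CD > 0"
  shows "Tbar_d ud CD rho =
           (let x = sqrt ((exp (2 * CD * rho) - 1) / (exp (2 * CD * rho) + 1))
            in (artanh x + arctan x) / sqrt (ud * CD))"
proof -
  define lam where "lam = exp (2 * CD * rho)"
  have "(lam - 1) * ud / ((lam + 1) * CD) / (ud / CD) = (lam - 1) / (lam + 1)"
    using assms by (simp add: divide_simps add_pos_pos lam_def)
  then have "sqrt ((lam - 1) * ud / ((lam + 1) * CD)) / sqrt (ud / CD)
               = sqrt ((lam - 1) / (lam + 1))"
    by (metis real_sqrt_divide)
  then show ?thesis
    unfolding Tbar_d_def Let_def lam_def[symmetric] by simp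
qed

lemma Tbar_d_pos:
  assumes "ud > 0" "CD > 0" "rho > 0"
  shows "Tbar_d ud CD rho > 0"
proof -
  define lam where "lam = exp (2 * CD * rho)"
  define x where "x = sqrt ((lam - 1) / (lam + 1))"
  have "lam > 1"
    unfolding lam_def using assms by simp
  then have x0: "x > 0" and x1: "x < 1"
    unfolding x_def by (auto simp: real_sqrt_lt_1_iff)
  have "artanh x > 0"
    using x0 x1 by (simp add: artanh_def field_simps)
  moreover have "arctan x > 0"
    using x0 by (simp add: zero_less_arctan_iff)
  ultimately have "(artanh x + arctan x) / sqrt (ud * CD) > 0"
    using assms by (intro divide_pos_pos add_pos_pos) simp_all
  then show ?thesis
    using Tbar_d_eq[OF assms(1,2)] unfolding Let_def x_def lam_def by simp
qed

lemma rhobar_d_pos: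
  assumes "rho_snp > 0"
  shows "rhobar_d Nd \<delta> rd rho_snp u R > 0"
  unfolding rhobar_d_def using assms by (simp add: add_nonneg_pos)

lemma mem_Dom_if_above_f_est:
  fixes rd :: "nat \<Rightarrow> real^3"
    and Ta :: "real^3 \<Rightarrow> real^3 \<Rightarrow> real \<Rightarrow> real"
    and Td :: "(nat \<Rightarrow> real^3) \<Rightarrow> real^3 \<Rightarrow> real"
  assumes pos: "va > 0" "ud > 0" "CD > 0" "rho_snp > 0" "dT \<ge> 0"
    and nonneg: "rho_p \<ge> 0" "rho_ac \<ge> 0"
    and r: "r = norm r *\<^sub>R u"
    and R: "R > rho_p"
    and above: "norm r \<ge> f_est rho_ac va ud CD dT Nd \<delta> rd rho_snp u R"
    and Td_bound: "Td rd (R *\<^sub>R u) \<le> Tbar_d ud CD (rhobar_d Nd \<delta> rd rho_snp u R)"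
    and Ta_bound: "Ta r (R *\<^sub>R u) rho_ac \<ge> (norm r - R - rho_ac) / va"
  shows "r \<in> Dom rho_p Ta Td rd rho_ac dT"
proof -
  define T where "T = Tbar_d ud CD (rhobar_d Nd \<delta> rd rho_snp u R)"
  have "T > 0"
    unfolding T_def using Tbar_d_pos rhobar_d_pos pos by blast
  then have margin: "va * (T + dT) > 0"
    using pos by simp
  have n_ge: "norm r \<ge> rho_ac + R + va * (T + dT)"
    using above unfolding f_est_def T_def .
  have gap: "R + rho_ac < norm r"
    using n_ge margin by linarith
  then have n: "norm r > 0"
    using R nonneg by linarith
  have "(R / norm r) *\<^sub>R r = (R / norm r) *\<^sub>R (norm r *\<^sub>R u)"
    using r by (rule arg_cong)
  also have "\<dots> = R *\<^sub>R u"
    using n by simp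
  finally have "(R / norm r) *\<^sub>R r = R *\<^sub>R u" .
  moreover have "rho_p / norm r < R / norm r"
    using n R by (simp add: divide_strict_right_mono)
  moreover have "R / norm r < 1 - rho_ac / norm r"
    using n gap by (simp add: field_simps)
  moreover have "T + dT \<le> (norm r - R - rho_ac) / va"
    using n_ge pos(1) by (simp add: field_simps)
  then have "Ta r (R *\<^sub>R u) rho_ac - Td rd (R *\<^sub>R u) \<ge> dT"
    using Ta_bound Td_bound unfolding T_def by linarith
  ultimately show ?thesis
    unfolding Dom_def by (intro CollectI exI[of _ "R / norm r"]) simp
qed

theorem theorem1:
  fixes rho_p rho_ac va ud CD rho_snp dT :: real
    and \<delta> Nd :: nat
    and rd :: "nat \<Rightarrow> real^3"
    and Ta :: "real^3 \<Rightarrow> real^3 \<Rightarrow> real \<Rightarrow> real"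
    and Td :: "(nat \<Rightarrow> real^3) \<Rightarrow> real^3 \<Rightarrow> real"
  assumes "rho_p > 0" "rho_ac > 0" "va > 0" "ud > 0" "CD > 0" "rho_snp > 0" "dT \<ge> 0"
    and "\<delta> \<ge> 2"
    and Td_bound: "\<And>u R. norm u = 1 \<Longrightarrow> R > rho_p \<Longrightarrow>
            Td rd (R *\<^sub>R u) \<le> Tbar_d ud CD (rhobar_d Nd \<delta> rd rho_snp u R)"
    and Ta_bound: "\<And>u R r. norm u = 1 \<Longrightarrow> R > rho_p \<Longrightarrow> r = norm r *\<^sub>R u \<Longrightarrow>
            Ta r (R *\<^sub>R u) rho_ac \<ge> (norm r - R - rho_ac) / va"
  shows "Dom_est rho_p rho_ac va ud CD dT Nd \<delta> rd rho_snp \<subseteq> Dom rho_p Ta Td rd rho_ac dT"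
proof
  fix r assume "r \<in> Dom_est rho_p rho_ac va ud CD dT Nd \<delta> rd rho_snp"
  then obtain R where "r \<noteq> 0" and R: "R > rho_p"
    and above: "norm r \<ge> f_est rho_ac va ud CD dT Nd \<delta> rd rho_snp ((1 / norm r) *\<^sub>R r) R"
    unfolding Dom_est_def Let_def by auto
  define u where "u = (1 / norm r) *\<^sub>R r"
  have u: "norm u = 1" and r: "r = norm r *\<^sub>R u"
    using \<open>r \<noteq> 0\<close> unfolding u_def by simp_all
  show "r \<in> Dom rho_p Ta Td rd rho_ac dT"
    using assms(1-7) r R above[folded u_def] Td_bound[OF u R] Ta_bound[OF u R r]
    by (intro mem_Dom_if_above_f_est) auto
qed

end
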